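(* For $-2<\psi<2$ let $E_\psi$ be the complex elliptic curve $y^2=4x^3-12x+4\psi$, and let $\delta_2\in H_1(E_\psi,\Z)$ be the class of the compact connected component (oval) of $E_\psi\cap\R^2$, oriented so that $\int_{\delta_2}\frac{dx}{y}>0$. Then $$\int_{\delta_2}\frac{dx}{y}=\frac{\pi}{\sqrt3}F\Big(\frac16,\frac56,1\Big|\frac{\psi+2}4\Big),\qquad \int_{\delta_2}\frac{xdx}{y}=-\frac{\pi}{\sqrt3}F\Big(-\frac16,\frac76,1\Big|\frac{\psi+2}4\Big),$$ where $F(a,b,c|z)=\sum_{n\ge0}\frac{(a)_n(b)_n}{(c)_n\,n!}z^n$ is the Gauss hypergeometric function and $(a)_n=a(a+1)\cdots(a+n-1)$. *)

theory Defs
  imports "HOL-Analysis.Analysis"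
begin

definition hyperF :: "real \<Rightarrow> real \<Rightarrow> real \<Rightarrow> real \<Rightarrow> real" where
  "hyperF a b c z = (\<Sum>n. pochhammer a n * pochhammer b n / (pochhammer c n * fact n) * z ^ n)"

definition cubicE :: "real \<Rightarrow> real \<Rightarrow> real" where
  "cubicE \<psi> x = 4 * x ^ 3 - 12 * x + 4 * \<psi>"

end

theory Submission
  imports Defs
begin

text \<open>
  On the oval, substitute \<open>x = -2 cos (pi/3 + 2/3 \<theta>)\<close> with \<open>sin \<theta> = s sin t\<close>, \<open>s\<^sup>2 = (\<psi> + 2) / 4\<close>,
  \<open>-pi/2 \<le> t \<le> pi/2\<close>: since \<open>cos (3 v) = 4 cos\<^sup>3 v - 3 cos v\<close>, the cubic becomes \<open>16 s\<^sup>2 cos\<^sup>2 t\<close>, and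
  \<open>dx / y\<close> and \<open>x dx / y\<close> become combinations of \<open>cos (a \<theta>) / cos \<theta> dt\<close> for \<open>a = 2/3, 4/3\<close> and of odd
  functions of \<open>t\<close>. The function \<open>cos (a \<theta>) / cos \<theta>\<close> is a power series in \<open>w = sin \<theta>\<close> whose coefficients are
  those of \<open>F((1 - a)/2, (1 + a)/2, 1/2 | w\<^sup>2)\<close>, because both sides solve
  \<open>(1 - w\<^sup>2) f'' - 3 w f' + (a\<^sup>2 - 1) f = 0\<close>; integrating it term by term against the Wallis integrals
  turns the \<open>1/2\<close> into \<open>1\<close> and gives \<open>pi F((1 - a)/2, (1 + a)/2, 1 | s\<^sup>2)\<close>.
\<close>

section \<open>A power series for \<open>cos (a \<theta>) / cos \<theta>\<close> in \<open>sin \<theta>\<close>\<close>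

definition cos_ratio_coeff :: "real \<Rightarrow> nat \<Rightarrow> real" where
  "cos_ratio_coeff a m =
     (if even m then pochhammer ((1 + a) / 2) (m div 2) * pochhammer ((1 - a) / 2) (m div 2)
                       / (pochhammer (1/2) (m div 2) * fact (m div 2))
      else 0)"

lemma cos_ratio_coeff_0 [simp]: "cos_ratio_coeff a 0 = 1"
  and cos_ratio_coeff_1 [simp]: "cos_ratio_coeff a (Suc 0) = 0"
  by (simp_all add: cos_ratio_coeff_def)

lemma cos_ratio_coeff_Suc_Suc:
  "cos_ratio_coeff a (Suc (Suc m)) = ((real m + 1)^2 - a^2) / ((real m + 2) * (real m + 1)) * cos_ratio_coeff a m"
proof (cases "even m")
  case True
  then obtain n where m: "m = 2 * n" by blast
  have "pochhammer (1/2::real) n \<noteq> 0" by (simp add: pochhammer_eq_0_iff)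
  then have "cos_ratio_coeff a (Suc (Suc m)) =
        ((1 + a) / 2 + n) * ((1 - a) / 2 + n) / ((1/2 + n) * (n + 1)) * cos_ratio_coeff a m"
    by (simp add: m cos_ratio_coeff_def pochhammer_Suc fact_Suc divide_simps)
  also have "((1 + a) / 2 + n) * ((1 - a) / 2 + n) / ((1/2 + n) * (n + 1))
             = ((real m + 1)^2 - a^2) / ((real m + 2) * (real m + 1))"
  proof -
    have "(1/2 + real n) * (n + 1) \<noteq> 0" "(real m + 2) * (real m + 1) \<noteq> 0"
      by (simp_all add: add_pos_pos)
    then show ?thesis
      by (simp add: m divide_simps power2_eq_square) (simp add: algebra_simps)
  qed
  finally show ?thesis .
next
  case False
  then show ?thesis by (simp add: cos_ratio_coeff_def)
qed

lemma abs_cos_ratio_coeff_le_1: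
  assumes "a^2 \<le> 3"
  shows "\<bar>cos_ratio_coeff a m\<bar> \<le> 1"
proof (induction m rule: nat_induct2)
  case (step m)
  have "\<bar>X - a^2\<bar> \<le> X + r" if "1 \<le> X" "1 \<le> r" for X r
    unfolding abs_le_iff using that assms zero_le_power2[of a] by linarith
  from this[of "(real m + 1)^2" "real m + 1"]
  have "\<bar>(real m + 1)^2 - a^2\<bar> \<le> (real m + 1)^2 + (real m + 1)"
    by simp
  also have "\<dots> = (real m + 2) * (real m + 1)"
    by (simp add: power2_eq_square algebra_simps)
  finally have "\<bar>((real m + 1)^2 - a^2) / ((real m + 2) * (real m + 1))\<bar> \<le> 1"
    by (simp add: abs_divide)
  then have "\<bar>cos_ratio_coeff a (Suc (Suc m))\<bar> \<le> 1 * 1"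
    unfolding cos_ratio_coeff_Suc_Suc abs_mult by (rule mult_mono[OF _ step]) simp_all
  then show ?case
    by (simp add: numeral_2_eq_2)
qed simp_all

definition powser :: "(nat \<Rightarrow> real) \<Rightarrow> real \<Rightarrow> real" where
  "powser c w = (\<Sum>n. c n * w^n)"

lemma summable_bounded_powser:
  fixes c :: "nat \<Rightarrow> real"
  assumes "\<And>n. \<bar>c n\<bar> \<le> 1" and "\<bar>w\<bar> < 1"
  shows "summable (\<lambda>n. c n * w^n)"
proof (rule summable_comparison_test)
  show "\<exists>N. \<forall>n\<ge>N. norm (c n * w^n) \<le> \<bar>w\<bar>^n"
    using assms(1) by (intro exI[of _ 0] allI impI) (simp add: abs_mult power_abs mult_left_le_one_le)
  show "summable (\<lambda>n. \<bar>w\<bar>^n)"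
    using assms(2) by (simp add: summable_geometric)
qed

lemma powser_has_real_derivative:
  fixes c :: "nat \<Rightarrow> real"
  assumes "\<And>w. \<bar>w\<bar> < 1 \<Longrightarrow> summable (\<lambda>n. c n * w^n)" and "\<bar>w\<bar> < 1"
  shows "(powser c has_real_derivative powser (diffs c) w) (at w)"
  unfolding powser_def[abs_def] using assms by (intro termdiffs_strong'[where K = 1]) auto

lemma summable_diffs_powser:
  fixes c :: "nat \<Rightarrow> real"
  assumes "\<And>w. \<bar>w\<bar> < 1 \<Longrightarrow> summable (\<lambda>n. c n * w^n)" and "\<bar>w\<bar> < 1"
  shows "summable (\<lambda>n. diffs c n * w^n)"
  using assms by (intro termdiff_converges[where K = 1]) auto

lemma sums_of_nat_mult_powser:
  fixes c :: "nat \<Rightarrow> real"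
  assumes "(\<lambda>n. diffs c n * w^n) sums s"
  shows "(\<lambda>n. of_nat n * c n * w^n) sums (w * s)"
proof -
  have "(\<lambda>n. w * (diffs c n * w^n)) = (\<lambda>n. of_nat (Suc n) * c (Suc n) * w^Suc n)"
    by (simp add: fun_eq_iff diffs_def mult_ac)
  then have "(\<lambda>n. of_nat (Suc n) * c (Suc n) * w^Suc n) sums (w * s)"
    using sums_mult[OF assms, where c = w] by simp
  then show ?thesis
    by (subst (asm) sums_Suc_iff) simp
qed

context
  fixes a :: real
  assumes a_bound: "a^2 \<le> 3"
begin

lemma summable_cos_ratio_powser:
  assumes "\<bar>w\<bar> < 1"
  shows "summable (\<lambda>n. cos_ratio_coeff a n * w^n)"
    and "summable (\<lambda>n. diffs (cos_ratio_coeff a) n * w^n)"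
    and "summable (\<lambda>n. diffs (diffs (cos_ratio_coeff a)) n * w^n)"
proof -
  have S: "summable (\<lambda>n. cos_ratio_coeff a n * v^n)" if "\<bar>v\<bar> < 1" for v
    by (rule summable_bounded_powser[OF abs_cos_ratio_coeff_le_1[OF a_bound] that])
  show "summable (\<lambda>n. cos_ratio_coeff a n * w^n)"
    by (rule S[OF assms])
  show "summable (\<lambda>n. diffs (cos_ratio_coeff a) n * w^n)"
    by (rule summable_diffs_powser[OF S assms])
  show "summable (\<lambda>n. diffs (diffs (cos_ratio_coeff a)) n * w^n)"
    by (rule summable_diffs_powser[OF summable_diffs_powser[OF S] assms])
qed

lemma cos_ratio_powser_ode:
  assumes "\<bar>w\<bar> < 1"
  defines "c \<equiv> cos_ratio_coeff a"
  shows "(1 - w^2) * powser (diffs (diffs c)) w - 3 * w * powser (diffs c) w + (a^2 - 1) * powser c w = 0"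
proof -
  note S = summable_cos_ratio_powser[OF assms(1), folded c_def, THEN summable_sums, folded powser_def]
  have S1: "(\<lambda>n. real n * c n * w^n) sums (w * powser (diffs c) w)"
    by (rule sums_of_nat_mult_powser[OF S(2)])
  have "(\<lambda>n. real n * diffs c n * w^n) sums (w * powser (diffs (diffs c)) w)"
    by (rule sums_of_nat_mult_powser[OF S(3)])
  from sums_mult[OF this, where c = w]
  have "(\<lambda>n. w * (real n * diffs c n * w^n)) sums (w^2 * powser (diffs (diffs c)) w)"
    by (simp add: power2_eq_square mult.assoc)
  moreover have "(\<lambda>n. w * (real n * diffs c n * w^n))
                 = (\<lambda>n. real (Suc n) * (real (Suc n) - 1) * c (Suc n) * w^Suc n)"
    by (simp add: fun_eq_iff diffs_def algebra_simps)
  ultimately have "(\<lambda>n. real (Suc n) * (real (Suc n) - 1) * c (Suc n) * w^Suc n)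
                     sums (w^2 * powser (diffs (diffs c)) w)"
    by simp
  then have S2: "(\<lambda>n. real n * (real n - 1) * c n * w^n) sums (w^2 * powser (diffs (diffs c)) w)"
    by (subst (asm) sums_Suc_iff) simp
  have "diffs (diffs c) n = ((real n + 1)^2 - a^2) * c n" for n
  proof -
    have "diffs (diffs c) n = (real n + 2) * (real n + 1) * c (Suc (Suc n))"
      by (simp add: diffs_def algebra_simps)
    also have "\<dots> = ((real n + 1)^2 - a^2) * c n"
    proof -
      have "(real n + 2) * (real n + 1) \<noteq> 0"
        by simp
      then show ?thesis
        unfolding c_def cos_ratio_coeff_Suc_Suc by simp
    qed
    finally show ?thesis .
  qed
  then have "(\<lambda>n. diffs (diffs c) n * w^n) = (\<lambda>n. ((real n + 1)^2 - a^2) * c n * w^n)"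
    by simp
  with S(3) have S0: "(\<lambda>n. ((real n + 1)^2 - a^2) * c n * w^n) sums powser (diffs (diffs c)) w"
    by (simp only:)
  have "(\<lambda>n. ((real n + 1)^2 - a^2) * c n * w^n - real n * (real n - 1) * c n * w^n
            - 3 * (real n * c n * w^n) + (a^2 - 1) * (c n * w^n))
        sums (powser (diffs (diffs c)) w - w^2 * powser (diffs (diffs c)) w
              - 3 * (w * powser (diffs c) w) + (a^2 - 1) * powser c w)"
    by (intro sums_add sums_diff sums_mult S0 S1 S2 S(1))
  moreover have "(\<lambda>n. ((real n + 1)^2 - a^2) * c n * w^n - real n * (real n - 1) * c n * w^n
            - 3 * (real n * c n * w^n) + (a^2 - 1) * (c n * w^n)) = (\<lambda>n. 0)"
    by (simp add: fun_eq_iff algebra_simps power2_eq_square)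
  ultimately have "(\<lambda>n. 0) sums (powser (diffs (diffs c)) w - w^2 * powser (diffs (diffs c)) w
              - 3 * (w * powser (diffs c) w) + (a^2 - 1) * powser c w)"
    by simp
  then have "powser (diffs (diffs c)) w - w^2 * powser (diffs (diffs c)) w
              - 3 * (w * powser (diffs c) w) + (a^2 - 1) * powser c w = 0"
    using sums_unique2 sums_zero by blast
  then show ?thesis
    by (simp add: algebra_simps)
qed

end

lemma harmonic_oscillator_eq_cos:
  fixes f g :: "real \<Rightarrow> real" and S :: "real set"
  assumes "convex S" "0 \<in> S" "t \<in> S" and "a \<noteq> 0"
    and f': "\<And>t. t \<in> S \<Longrightarrow> (f has_real_derivative g t) (at t)"
    and g': "\<And>t. t \<in> S \<Longrightarrow> (g has_real_derivative - (a^2 * f t)) (at t)"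
    and "f 0 = 1" "g 0 = 0"
  shows "f t = cos (a * t)"
proof -
  \<comment> \<open>the energy of the deviation from the solution \<open>cos (a t)\<close> is conserved\<close>
  define E where "E t = (g t + a * sin (a * t))^2 + a^2 * (f t - cos (a * t))^2" for t
  have "(E has_real_derivative 0) (at t within S)" if "t \<in> S" for t
    unfolding E_def
    by (rule has_field_derivative_at_within)
       (auto intro!: derivative_eq_intros f'[OF that] g'[OF that] simp: algebra_simps power2_eq_square)
  then obtain c where "\<forall>t\<in>S. E t = c"
    using has_field_derivative_zero_constant[OF \<open>convex S\<close>] by blast
  moreover have "E 0 = 0"
    by (simp add: E_def \<open>f 0 = 1\<close> \<open>g 0 = 0\<close>)
  ultimately have "E t = 0"
    using \<open>0 \<in> S\<close> \<open>t \<in> S\<close> by metis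
  then have "a^2 * (f t - cos (a * t))^2 = 0"
    unfolding E_def by (smt (verit) zero_le_power2 mult_nonneg_nonneg)
  then show ?thesis
    using \<open>a \<noteq> 0\<close> by simp
qed

lemma abs_sin_less_1:
  assumes "\<bar>t\<bar> < pi/2"
  shows "\<bar>sin t\<bar> < 1"
proof -
  have "cos t > 0"
    using assms by (intro cos_gt_zero_pi) auto
  then have "(sin t)^2 < 1"
    using sin_cos_squared_add[of t] by (smt (verit) zero_less_power)
  then show ?thesis
    by (simp add: abs_square_less_1)
qed

lemma cos_mult_eq_cos_ratio_powser:
  assumes "a^2 \<le> 3" "a \<noteq> 0" "\<bar>\<theta>\<bar> < pi/2"
  shows "cos (a * \<theta>) = powser (cos_ratio_coeff a) (sin \<theta>) * cos \<theta>"
proof -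
  define c where "c = cos_ratio_coeff a"
  let ?S = "{-pi/2<..<pi/2}"
  have sin_S: "\<bar>sin t\<bar> < 1" if "t \<in> ?S" for t
    using that by (intro abs_sin_less_1) auto
  have S: "summable (\<lambda>n. c n * w^n)" if "\<bar>w\<bar> < 1" for w
    unfolding c_def by (rule summable_cos_ratio_powser(1)[OF assms(1) that])
  have dP: "((\<lambda>t. powser c (sin t)) has_real_derivative powser (diffs c) (sin t) * cos t) (at t)"
    if "t \<in> ?S" for t
    by (rule DERIV_chain2[OF powser_has_real_derivative[OF S sin_S[OF that]] DERIV_sin])
  have dP1: "((\<lambda>t. powser (diffs c) (sin t)) has_real_derivative powser (diffs (diffs c)) (sin t) * cos t) (at t)"
    if "t \<in> ?S" for t
    by (rule DERIV_chain2[OF powser_has_real_derivative[OF summable_diffs_powser[OF S] sin_S[OF that]] DERIV_sin])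
  define f where "f t = powser c (sin t) * cos t" for t
  define g where "g t = powser (diffs c) (sin t) * (cos t)^2 - powser c (sin t) * sin t" for t
  have "cos (a * \<theta>) = f \<theta>"
  proof (rule harmonic_oscillator_eq_cos[symmetric])
    show "(f has_real_derivative g t) (at t)" if "t \<in> ?S" for t
      unfolding f_def[abs_def] g_def
      by (auto intro!: derivative_eq_intros dP[OF that] simp: power2_eq_square algebra_simps)
    show "(g has_real_derivative - (a^2 * f t)) (at t)" if "t \<in> ?S" for t
    proof -
      have ode: "(1 - (sin t)^2) * powser (diffs (diffs c)) (sin t) - 3 * sin t * powser (diffs c) (sin t)
                   + (a^2 - 1) * powser c (sin t) = 0"
        unfolding c_def by (rule cos_ratio_powser_ode[OF assms(1) sin_S[OF that]])
      have "(g has_real_derivative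
              cos t * ((1 - (sin t)^2) * powser (diffs (diffs c)) (sin t)
                       - 3 * sin t * powser (diffs c) (sin t) - powser c (sin t))) (at t)"
        unfolding g_def[abs_def]
        by (auto intro!: derivative_eq_intros dP[OF that] dP1[OF that]
                 simp: algebra_simps cos_squared_eq)
      moreover have "cos t * ((1 - (sin t)^2) * powser (diffs (diffs c)) (sin t)
                       - 3 * sin t * powser (diffs c) (sin t) - powser c (sin t)) = - (a^2 * f t)"
        using arg_cong[OF ode, of "(*) (cos t)"] unfolding f_def by (simp add: algebra_simps)
      ultimately show ?thesis
        by simp
    qed
    show "f 0 = 1" "g 0 = 0"
      using powser_zero[of c] powser_zero[of "diffs c"]
      by (simp_all add: f_def g_def powser_def c_def diffs_def)
  qed (use assms in auto)
  then show ?thesis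
    by (simp add: f_def c_def)
qed

section \<open>Term-by-term integration against the Wallis integrals\<close>

fun wallis_integral :: "nat \<Rightarrow> real" where
  "wallis_integral 0 = pi"
| "wallis_integral (Suc 0) = 0"
| "wallis_integral (Suc (Suc n)) = (real n + 1) / (real n + 2) * wallis_integral n"

lemma has_integral_sin_power:
  "((\<lambda>t. sin t ^ n) has_integral wallis_integral n) {-pi/2..pi/2}"
proof (induction n rule: wallis_integral.induct)
  case 1
  show ?case
    using has_integral_const_real[of "1::real" "-pi/2" "pi/2"] by simp
next
  case 2
  have "((\<lambda>t. sin t) has_integral (- cos (pi/2) - - cos (-pi/2))) {-pi/2..pi/2}"
    by (intro fundamental_theorem_of_calculus)
       (auto intro!: derivative_eq_intros simp: has_real_derivative_iff_has_vector_derivative[symmetric])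
  then show ?case
    by simp
next
  case (3 n)
  \<comment> \<open>integration by parts, with the boundary term \<open>sin t ^ (n + 1) * cos t\<close> vanishing at \<open>\<plusminus>pi/2\<close>\<close>
  have "((\<lambda>t. (real n + 2) * sin t ^ Suc (Suc n) - (real n + 1) * sin t ^ n) has_integral
          (- (sin (pi/2) ^ Suc n * cos (pi/2)) - - (sin (-pi/2) ^ Suc n * cos (-pi/2)))) {-pi/2..pi/2}"
  proof (intro fundamental_theorem_of_calculus)
    fix x :: real
    have "((\<lambda>t. sin t ^ Suc n) has_real_derivative real (Suc n) * sin x ^ n * cos x) (at x)"
      using DERIV_chain2[OF DERIV_pow[of "Suc n" "sin x"] DERIV_sin[of x]] by simp
    from DERIV_minus[OF DERIV_mult[OF this DERIV_cos[of x]]]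
    have "((\<lambda>t. - (sin t ^ Suc n * cos t)) has_real_derivative
            - (real (Suc n) * sin x ^ n * (cos x * cos x) + sin x ^ Suc n * (- sin x))) (at x)"
      by (simp add: mult_ac)
    also have "- (real (Suc n) * sin x ^ n * (cos x * cos x) + sin x ^ Suc n * (- sin x))
             = (real n + 2) * sin x ^ Suc (Suc n) - (real n + 1) * sin x ^ n"
    proof -
      have "cos x * cos x = 1 - sin x * sin x"
        using sin_cos_squared_add[of x] by (simp add: power2_eq_square)
      then show ?thesis
        by (simp only:) (simp add: algebra_simps)
    qed
    finally show "((\<lambda>t. - (sin t ^ Suc n * cos t)) has_vector_derivative
                    (real n + 2) * sin x ^ Suc (Suc n) - (real n + 1) * sin x ^ n) (at x within {-pi/2..pi/2})"
      by (simp add: has_real_derivative_iff_has_vector_derivative has_vector_derivative_at_within)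
  qed simp
  from has_integral_add[OF this has_integral_mult_right[OF "3.IH", of "real n + 1"]]
  have "((\<lambda>t. (real n + 2) * sin t ^ Suc (Suc n)) has_integral (real n + 1) * wallis_integral n) {-pi/2..pi/2}"
    by simp
  from has_integral_mult_right[OF this, of "1 / (real n + 2)"]
  show ?case
    by simp
qed

lemma wallis_integral_even: "wallis_integral (2 * n) = pi * pochhammer (1/2) n / fact n"
proof (induction n)
  case (Suc n)
  have "wallis_integral (2 * Suc n) = (2 * real n + 1) / (2 * real n + 2) * wallis_integral (2 * n)"
    by (simp add: numeral_2_eq_2)
  also have "\<dots> = pi * pochhammer (1/2) (Suc n) / fact (Suc n)"
    unfolding Suc pochhammer_Suc by (simp add: field_simps)
  finally show ?case .
qed simp

lemma has_integral_powser_sin: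
  fixes c :: "nat \<Rightarrow> real"
  assumes c: "\<And>n. \<bar>c n\<bar> \<le> 1" and s: "0 \<le> s" "s < 1"
  obtains J where "(\<lambda>n. c n * s^n * wallis_integral n) sums J"
    and "((\<lambda>t. powser c (s * sin t)) has_integral J) {-pi/2..pi/2}"
proof -
  let ?F = "\<lambda>n t. c n * (s * sin t)^n"
  have u: "uniform_limit {-pi/2..pi/2} (\<lambda>N t. \<Sum>n<N. ?F n t) (\<lambda>t. \<Sum>n. ?F n t) sequentially"
  proof (rule Weierstrass_m_test)
    show "norm (?F n t) \<le> s^n" for n t
    proof -
      have "\<bar>s * sin t\<bar> \<le> s"
        using s by (simp add: abs_mult mult_left_le)
      then have "\<bar>s * sin t\<bar>^n \<le> s^n"
        by (intro power_mono) auto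
      then have "\<bar>c n\<bar> * \<bar>s * sin t\<bar>^n \<le> 1 * s^n"
        by (rule mult_mono[OF c]) simp_all
      then show ?thesis
        by (simp add: abs_mult power_abs)
    qed
    show "summable (\<lambda>n. s^n)"
      using s by (simp add: summable_geometric)
  qed
  have cont: "continuous_on {-pi/2..pi/2} (\<lambda>t. \<Sum>n<N. ?F n t)" for N
    by (intro continuous_intros)
  obtain I J where I: "\<And>N. ((\<lambda>t. \<Sum>n<N. ?F n t) has_integral I N) {-pi/2..pi/2}"
    and J: "((\<lambda>t. \<Sum>n. ?F n t) has_integral J) {-pi/2..pi/2}" and "I \<longlonglongrightarrow> J"
    using uniform_limit_integral[OF u cont] by auto
  have "((\<lambda>t. \<Sum>n<N. ?F n t) has_integral (\<Sum>n<N. c n * s^n * wallis_integral n)) {-pi/2..pi/2}" for N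
  proof (rule has_integral_sum)
    show "((\<lambda>t. ?F n t) has_integral c n * s^n * wallis_integral n) {-pi/2..pi/2}" for n
      using has_integral_mult_right[OF has_integral_sin_power, of "c n * s^n" n]
      by (simp add: power_mult_distrib mult_ac)
  qed simp
  then have "I = (\<lambda>N. \<Sum>n<N. c n * s^n * wallis_integral n)"
    using I has_integral_unique by blast
  with \<open>I \<longlonglongrightarrow> J\<close> have "(\<lambda>n. c n * s^n * wallis_integral n) sums J"
    by (simp add: sums_def)
  moreover have "((\<lambda>t. powser c (s * sin t)) has_integral J) {-pi/2..pi/2}"
    using J by (simp add: powser_def)
  ultimately show ?thesis
    by (rule that)
qed

lemma abs_mult_sin_less_1:
  fixes s t :: real
  assumes "\<bar>s\<bar> < 1"
  shows "\<bar>s * sin t\<bar> < 1"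
proof -
  have "\<bar>s * sin t\<bar> \<le> \<bar>s\<bar>"
    unfolding abs_mult by (rule mult_right_le_one_le) simp_all
  then show ?thesis
    using assms by simp
qed

lemma cos_arcsin_mult_sin_pos:
  assumes "\<bar>s\<bar> < 1"
  shows "cos (arcsin (s * sin t)) > 0"
proof -
  have "- (pi/2) < arcsin (s * sin t) \<and> arcsin (s * sin t) < pi/2"
    using abs_mult_sin_less_1[OF assms, of t] by (intro arcsin_lt_bounded) auto
  then show ?thesis
    by (intro cos_gt_zero_pi) auto
qed

lemma has_integral_cos_ratio_hyperF:
  assumes a: "a^2 \<le> 3" "a \<noteq> 0" and s: "0 \<le> s" "s < 1"
  shows "((\<lambda>t. cos (a * arcsin (s * sin t)) / cos (arcsin (s * sin t))) has_integral
           pi * hyperF ((1 - a) / 2) ((1 + a) / 2) 1 (s^2)) {-pi/2..pi/2}"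
proof -
  obtain J where JS: "(\<lambda>n. cos_ratio_coeff a n * s^n * wallis_integral n) sums J"
    and JI: "((\<lambda>t. powser (cos_ratio_coeff a) (s * sin t)) has_integral J) {-pi/2..pi/2}"
    using has_integral_powser_sin[OF abs_cos_ratio_coeff_le_1[OF a(1)] s] .
  have "(\<lambda>n. cos_ratio_coeff a (2 * n) * s^(2 * n) * wallis_integral (2 * n)) sums J"
  proof (subst sums_mono_reindex)
    show "strict_mono (\<lambda>n::nat. 2 * n)"
      by (rule strict_monoI) simp
    show "cos_ratio_coeff a n * s^n * wallis_integral n = 0" if "n \<notin> range (\<lambda>n::nat. 2 * n)" for n
      using that by (auto simp: cos_ratio_coeff_def elim!: evenE)
  qed (rule JS)
  moreover have "cos_ratio_coeff a (2 * n) * s^(2 * n) * wallis_integral (2 * n)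
      = pi * (pochhammer ((1 - a) / 2) n * pochhammer ((1 + a) / 2) n / (pochhammer 1 n * fact n) * (s^2)^n)" for n
  proof -
    have "cos_ratio_coeff a (2 * n) = pochhammer ((1 + a) / 2) n * pochhammer ((1 - a) / 2) n
                                        / (pochhammer (1/2) n * fact n)"
      by (simp add: cos_ratio_coeff_def)
    moreover have "pochhammer (1/2::real) n \<noteq> 0"
      by (simp add: pochhammer_eq_0_iff)
    ultimately show ?thesis
      unfolding wallis_integral_even power_mult pochhammer_fact[symmetric] by (simp add: field_simps)
  qed
  ultimately have "(\<lambda>n. pi * (pochhammer ((1 - a) / 2) n * pochhammer ((1 + a) / 2) n
                        / (pochhammer 1 n * fact n) * (s^2)^n)) sums (pi * (J / pi))"
    by simp
  then have "(\<lambda>n. pochhammer ((1 - a) / 2) n * pochhammer ((1 + a) / 2) n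
                   / (pochhammer 1 n * fact n) * (s^2)^n) sums (J / pi)"
    by (subst (asm) sums_mult_iff) simp_all
  then have "J = pi * hyperF ((1 - a) / 2) ((1 + a) / 2) 1 (s^2)"
    unfolding hyperF_def by (simp add: sums_iff)
  moreover have "powser (cos_ratio_coeff a) (s * sin t) = cos (a * arcsin (s * sin t)) / cos (arcsin (s * sin t))" for t
  proof -
    have "\<bar>s * sin t\<bar> < 1"
      using s by (intro abs_mult_sin_less_1) simp
    then have "\<bar>arcsin (s * sin t)\<bar> < pi/2"
      using arcsin_lt_bounded[of "s * sin t"] unfolding abs_less_iff by linarith
    from cos_mult_eq_cos_ratio_powser[OF a this] \<open>\<bar>s * sin t\<bar> < 1\<close>
    show ?thesis
      using cos_arcsin_mult_sin_pos[of s t] s by simp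
  qed
  ultimately show ?thesis
    using JI by simp
qed

lemma has_integral_odd_function:
  fixes f :: "real \<Rightarrow> real"
  assumes "continuous_on {-c..c} f" and "\<And>t. f (-t) = - f t"
  shows "(f has_integral 0) {-c..c}"
proof -
  define I where "I = integral {-c..c} f"
  have I: "(f has_integral I) {-c..c}"
    unfolding I_def using assms(1) by (intro integrable_integral integrable_continuous_real)
  then have "((\<lambda>t. f (-t)) has_integral I) {-c..c}"
    using has_integral_reflect_real[where f = f and i = I and a = "-c" and b = c] by simp
  then have "((\<lambda>t. - (- f t)) has_integral - I) {-c..c}"
    unfolding assms(2) by (rule has_integral_neg)
  then have "(f has_integral - I) {-c..c}"
    by simp
  then have "I = - I"
    using I has_integral_unique by blast
  then show ?thesis
    using I by simp
qed

lemma has_integral_sin_ratio_zero: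
  assumes "\<bar>s\<bar> < 1"
  shows "((\<lambda>t. sin (b * arcsin (s * sin t)) / cos (arcsin (s * sin t))) has_integral 0) {-pi/2..pi/2}"
proof -
  have w: "-1 \<le> s * sin t" "s * sin t \<le> 1" "cos (arcsin (s * sin t)) \<noteq> 0" for t
    using abs_mult_sin_less_1[OF assms, of t] cos_arcsin_mult_sin_pos[OF assms, of t] by auto
  have "((\<lambda>t. sin (b * arcsin (s * sin t)) / cos (arcsin (s * sin t))) has_integral 0) {-(pi/2)..pi/2}"
  proof (rule has_integral_odd_function)
    show "continuous_on {-(pi/2)..pi/2} (\<lambda>t. sin (b * arcsin (s * sin t)) / cos (arcsin (s * sin t)))"
      by (intro continuous_intros) (simp_all add: w)
    fix t
    have "arcsin (s * sin (-t)) = - arcsin (s * sin t)"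
      using w(1,2)[of t] by (simp add: arcsin_minus)
    then show "sin (b * arcsin (s * sin (-t))) / cos (arcsin (s * sin (-t)))
                 = - (sin (b * arcsin (s * sin t)) / cos (arcsin (s * sin t)))"
      by simp
  qed
  then show ?thesis
    by simp
qed

section \<open>The period integrals of the oval\<close>

lemma has_integral_substitution_nonneg:
  fixes f g g' G :: "real \<Rightarrow> real"
  assumes "c < d"
    and g': "\<And>t. (g has_real_derivative g' t) (at t)" "\<And>t. isCont g' t"
    and g'_nonneg: "\<And>t. t \<in> {c..d} \<Longrightarrow> 0 \<le> g' t"
    and f: "\<And>t. t \<in> {c<..<d} \<Longrightarrow> isCont f (g t)" "\<And>t. t \<in> {c<..<d} \<Longrightarrow> 0 \<le> f (g t)"
    and G: "continuous_on {c..d} G" "\<And>t. t \<in> {c<..<d} \<Longrightarrow> f (g t) * g' t = G t"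
  shows "(f has_integral integral {c..d} G) {g c..g d}"
proof -
  have "set_integrable lborel {c..d} G"
    unfolding set_integrable_def using G(1) by (intro borel_integrable_compact) auto
  then have G_int: "set_integrable lborel {c<..<d} G"
    by (rule set_integrable_subset) auto
  then have fg_int: "set_integrable lborel (einterval c d) (\<lambda>t. f (g t) * g' t)"
    by (subst set_integrable_cong[OF refl refl G(2)]) auto
  have g_cont: "isCont g t" for t
    by (rule DERIV_isCont[OF g'(1)])
  have lim_c: "((ereal \<circ> g \<circ> real_of_ereal) \<longlongrightarrow> ereal (g c)) (at_right (ereal c))"
  proof -
    have "(g \<longlongrightarrow> g c) (at_right c)"
      using g_cont[of c] unfolding isCont_def by (rule tendsto_mono[rotated]) (simp add: at_le)
    then show ?thesis
      unfolding o_assoc[symmetric] ereal_tendsto_simps1 ereal_tendsto_simps2 by (simp add: comp_def)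
  qed
  have lim_d: "((ereal \<circ> g \<circ> real_of_ereal) \<longlongrightarrow> ereal (g d)) (at_left (ereal d))"
  proof -
    have "(g \<longlongrightarrow> g d) (at_left d)"
      using g_cont[of d] unfolding isCont_def by (rule tendsto_mono[rotated]) (simp add: at_le)
    then show ?thesis
      unfolding o_assoc[symmetric] ereal_tendsto_simps1 ereal_tendsto_simps2 by (simp add: comp_def)
  qed
  note subst = interval_integral_substitution_nonneg[of c d g g' f, OF _ _ _ _ _ _ lim_c lim_d fg_int]
  have f_int: "set_integrable lborel {g c<..<g d} f"
    using subst(1) \<open>c < d\<close> g' g'_nonneg f by simp
  have "g c \<le> g d"
  proof (rule DERIV_nonneg_imp_increasing_open[where f = g])
    show "\<exists>y. DERIV g x :> y \<and> 0 \<le> y" if "c < x" "x < d" for x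
      using g'(1)[of x] g'_nonneg[of x] that by auto
    show "continuous_on {c..d} g"
      by (intro continuous_at_imp_continuous_on ballI g_cont)
  qed (use \<open>c < d\<close> in simp)
  have "integral {g c<..<g d} f = (LBINT x=ereal (g c)..ereal (g d). f x)"
    using \<open>g c \<le> g d\<close> by (simp add: interval_integral_Ioo set_borel_integral_eq_integral(2)[OF f_int])
  also have "\<dots> = (LBINT t=ereal c..ereal d. f (g t) * g' t)"
    using subst(2) \<open>c < d\<close> g' g'_nonneg f by simp
  also have "\<dots> = (LINT t:{c<..<d}|lborel. f (g t) * g' t)"
    using \<open>c < d\<close> by (simp add: interval_integral_Ioo)
  also have "\<dots> = (LINT t:{c<..<d}|lborel. G t)"
    by (rule set_lebesgue_integral_cong) (auto simp: G(2))
  also have "\<dots> = integral {c..d} G"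
    using set_borel_integral_eq_integral[OF G_int] by (simp add: integral_open_interval_real)
  finally have "integral {g c<..<g d} f = integral {c..d} G" .
  moreover have "(f has_integral integral {g c<..<g d} f) {g c<..<g d}"
    using set_borel_integral_eq_integral(1)[OF f_int] by (rule integrable_integral)
  ultimately show ?thesis
    by (simp add: has_integral_Icc_iff_Ioo)
qed

lemma cubicE_eq_product:
  assumes "r1 \<noteq> r2" "cubicE \<psi> r1 = 0" "cubicE \<psi> r2 = 0"
  shows "cubicE \<psi> x = 4 * (x - r1) * (x - r2) * (x + r1 + r2)"
proof -
  define A where "A = -12 - 4 * (r1 * r2 - (r1 + r2)^2)"
  define B where "B = 4 * \<psi> - 4 * (r1 * r2) * (r1 + r2)"
  have rem: "cubicE \<psi> y - 4 * (y - r1) * (y - r2) * (y + r1 + r2) = A * y + B" for y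
    unfolding cubicE_def A_def B_def by (simp add: algebra_simps power2_eq_square power3_eq_cube)
  have "A * r1 + B = 0" "A * r2 + B = 0"
    using rem[of r1] rem[of r2] assms(2,3) by simp_all
  moreover have "A * (r2 - r1) = (A * r2 + B) - (A * r1 + B)"
    by (simp add: algebra_simps)
  ultimately have "A * (r2 - r1) = 0"
    by simp
  with assms(1) have "A = 0"
    by simp
  with \<open>A * r1 + B = 0\<close> have "B = 0"
    by simp
  show ?thesis
    using rem[of x] \<open>A = 0\<close> \<open>B = 0\<close> by simp
qed

lemma cubic_positive_between_roots:
  fixes p :: "real \<Rightarrow> real"
  assumes r: "r1 < r2" "r2 < r3" and p: "\<And>x. p x = 4 * (x - r1) * (x - r2) * (x - r3)"
    and e: "e1 < e2" "p e1 = 0" "p e2 = 0" and pos: "\<forall>x\<in>{e1<..<e2}. p x > 0"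
  shows "e1 = r1 \<and> e2 = r2"
proof -
  have roots: "e = r1 \<or> e = r2 \<or> e = r3" if "p e = 0" for e
    using that unfolding p by simp
  have "p ((r2 + r3) / 2) < 0"
    unfolding p using r by (intro mult_pos_neg) (auto intro: mult_pos_pos)
  then have "\<not> (e1 \<le> r2 \<and> r3 \<le> e2)"
  proof (intro notI)
    assume "e1 \<le> r2 \<and> r3 \<le> e2"
    then have "(r2 + r3) / 2 \<in> {e1<..<e2}"
      using r by auto
    with pos \<open>p ((r2 + r3) / 2) < 0\<close> show False
      by fastforce
  qed
  moreover have "\<not> (e1 < r2 \<and> r2 < e2)"
    using pos by (force simp: p)
  ultimately show ?thesis
    using roots[OF e(2)] roots[OF e(3)] e(1) r by auto
qed

lemma sqrt_3_div_3: "sqrt 3 / 3 = 1 / sqrt (3::real)"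
  by (simp add: divide_simps)

definition oval_scale :: "real \<Rightarrow> real" where
  "oval_scale \<psi> = sqrt ((\<psi> + 2) / 4)"

definition oval_angle :: "real \<Rightarrow> real \<Rightarrow> real" where
  "oval_angle \<psi> t = arcsin (oval_scale \<psi> * sin t)"

text \<open>Trigonometric solution of the cubic: \<open>x = -2 cos v\<close> turns \<open>4 x\<^sup>3 - 12 x\<close> into \<open>-8 cos (3 v)\<close>,
  and \<open>3 v = pi + 2 * oval_angle \<psi> t\<close> makes \<open>cubicE \<psi> x\<close> equal to \<open>(4 s cos t)\<^sup>2\<close>, \<open>s = oval_scale \<psi>\<close>.
  The density is chosen so that \<open>2 dx / sqrt (cubicE \<psi> x) = oval_density \<psi> t dt\<close>.\<close>

definition oval_param :: "real \<Rightarrow> real \<Rightarrow> real" where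
  "oval_param \<psi> t = -2 * cos (pi/3 + 2/3 * oval_angle \<psi> t)"

definition oval_density :: "real \<Rightarrow> real \<Rightarrow> real" where
  "oval_density \<psi> t = 2/3 * sin (pi/3 + 2/3 * oval_angle \<psi> t) / cos (oval_angle \<psi> t)"

lemma oval_param_ge: "-2 \<le> oval_param \<psi> t"
  by (simp add: oval_param_def)

context
  fixes \<psi> :: real
  assumes psi: "-2 < \<psi>" "\<psi> < 2"
begin

lemma oval_scale_bounds: "0 < oval_scale \<psi>" "oval_scale \<psi> < 1"
  using psi by (auto simp: oval_scale_def real_sqrt_lt_1_iff)

lemma oval_scale_sq: "(oval_scale \<psi>)^2 = (\<psi> + 2) / 4"
  using psi by (simp add: oval_scale_def)

lemma abs_oval_scale_sin: "\<bar>oval_scale \<psi> * sin t\<bar> < 1"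
  using oval_scale_bounds by (intro abs_mult_sin_less_1) simp

lemma cos_oval_angle_pos: "cos (oval_angle \<psi> t) > 0"
  unfolding oval_angle_def using oval_scale_bounds by (intro cos_arcsin_mult_sin_pos) simp

lemma sin_oval_angle: "sin (oval_angle \<psi> t) = oval_scale \<psi> * sin t"
  unfolding oval_angle_def using abs_oval_scale_sin[of t] by (simp add: abs_less_iff)

lemma abs_oval_angle: "\<bar>oval_angle \<psi> t\<bar> < pi/2"
  using arcsin_lt_bounded[of "oval_scale \<psi> * sin t"] abs_oval_scale_sin[of t]
  unfolding oval_angle_def abs_less_iff by linarith

lemma cubicE_oval_param: "cubicE \<psi> (oval_param \<psi> t) = 16 * (oval_scale \<psi>)^2 * (cos t)^2"
proof -
  define v where "v = pi/3 + 2/3 * oval_angle \<psi> t"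
  have "cos (3 * v) = - cos (2 * oval_angle \<psi> t)"
    by (simp add: v_def algebra_simps)
  also have "\<dots> = 2 * (oval_scale \<psi> * sin t)^2 - 1"
    unfolding cos_double_sin sin_oval_angle by simp
  finally have "4 * cos v ^ 3 - 3 * cos v = 2 * (oval_scale \<psi> * sin t)^2 - 1"
    unfolding cos_treble_cos .
  moreover have "cubicE \<psi> (oval_param \<psi> t) = -8 * (4 * cos v ^ 3 - 3 * cos v) + 4 * \<psi>"
    by (simp add: cubicE_def oval_param_def v_def power3_eq_cube algebra_simps)
  ultimately have "cubicE \<psi> (oval_param \<psi> t) = 8 + 4 * \<psi> - 16 * (oval_scale \<psi> * sin t)^2"
    by simp
  also have "\<dots> = 16 * (oval_scale \<psi>)^2 * (cos t)^2"
    unfolding power_mult_distrib oval_scale_sq cos_squared_eq by (simp add: algebra_simps)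
  finally show ?thesis .
qed

lemma oval_angle_has_derivative:
  "(oval_angle \<psi> has_real_derivative oval_scale \<psi> * cos t / cos (oval_angle \<psi> t)) (at t)"
proof -
  have w: "-1 < oval_scale \<psi> * sin t" "oval_scale \<psi> * sin t < 1"
    using abs_oval_scale_sin[of t] by auto
  from DERIV_chain2[OF DERIV_arcsin[OF w] DERIV_cmult[OF DERIV_sin, of "oval_scale \<psi>" t]]
  show ?thesis
    using w unfolding oval_angle_def[abs_def]
    by (simp add: cos_arcsin divide_inverse mult_ac)
qed

lemma oval_param_has_derivative:
  "(oval_param \<psi> has_real_derivative 2 * oval_scale \<psi> * cos t * oval_density \<psi> t) (at t)"
  unfolding oval_param_def[abs_def] oval_density_def
  by (auto intro!: derivative_eq_intros oval_angle_has_derivative)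

lemma oval_density_pos: "oval_density \<psi> t > 0"
proof -
  have "sin (pi/3 + 2/3 * oval_angle \<psi> t) > 0"
    using abs_oval_angle[of t] by (intro sin_gt_zero) (auto simp: abs_less_iff)
  then show ?thesis
    unfolding oval_density_def using cos_oval_angle_pos[of t] by simp
qed

lemma isCont_oval_angle: "isCont (oval_angle \<psi>) t"
  using oval_angle_has_derivative by (rule DERIV_isCont)

lemma isCont_oval_density: "isCont (oval_density \<psi>) t"
  unfolding oval_density_def[abs_def]
  using isCont_oval_angle cos_oval_angle_pos[of t] by (auto intro!: continuous_intros)

lemma oval_ends_cubic_roots: "cubicE \<psi> (oval_param \<psi> (-pi/2)) = 0" "cubicE \<psi> (oval_param \<psi> (pi/2)) = 0"
  by (simp_all add: cubicE_oval_param)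

lemma oval_ends_ordered:
  "oval_param \<psi> (-pi/2) < oval_param \<psi> (pi/2)"
  "oval_param \<psi> (pi/2) < - (oval_param \<psi> (-pi/2) + oval_param \<psi> (pi/2))"
proof -
  define \<beta> where "\<beta> = 2/3 * arcsin (oval_scale \<psi>)"
  have "0 < arcsin (oval_scale \<psi>)" "arcsin (oval_scale \<psi>) < pi/2"
    using arcsin_less_mono[of 0 "oval_scale \<psi>"] arcsin_lt_bounded[of "oval_scale \<psi>"] oval_scale_bounds
    by auto
  then have \<beta>: "0 < \<beta>" "\<beta> < pi/3"
    by (auto simp: \<beta>_def)
  have ends: "oval_param \<psi> (pi/2) = -2 * cos (pi/3 + \<beta>)" "oval_param \<psi> (-pi/2) = -2 * cos (pi/3 - \<beta>)"
    using oval_scale_bounds by (simp_all add: oval_param_def oval_angle_def \<beta>_def arcsin_minus)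
  have "oval_param \<psi> (pi/2) - oval_param \<psi> (-pi/2) = 4 * sin (pi/3) * sin \<beta>"
    unfolding ends cos_add cos_diff by (simp add: algebra_simps)
  moreover have "sin \<beta> > 0" "sin (pi/3) > 0"
    using \<beta> by (auto intro: sin_gt_zero simp: sin_60)
  ultimately show "oval_param \<psi> (-pi/2) < oval_param \<psi> (pi/2)"
    by (smt (verit) mult_pos_pos)
  have "- (oval_param \<psi> (-pi/2) + oval_param \<psi> (pi/2)) - oval_param \<psi> (pi/2) = 2 * sqrt 3 * sin (pi/3 - \<beta>)"
    unfolding ends cos_add cos_diff sin_diff sin_60 cos_60 by (simp add: algebra_simps)
  moreover have "sin (pi/3 - \<beta>) > 0"
    using \<beta> by (intro sin_gt_zero) auto
  ultimately show "oval_param \<psi> (pi/2) < - (oval_param \<psi> (-pi/2) + oval_param \<psi> (pi/2))"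
    by (smt (verit) mult_pos_pos real_sqrt_gt_zero)
qed

lemma oval_ends:
  assumes "e1 < e2" "cubicE \<psi> e1 = 0" "cubicE \<psi> e2 = 0" "\<forall>x\<in>{e1<..<e2}. cubicE \<psi> x > 0"
  shows "e1 = oval_param \<psi> (-pi/2) \<and> e2 = oval_param \<psi> (pi/2)"
proof (rule cubic_positive_between_roots[OF oval_ends_ordered _ assms])
  show "cubicE \<psi> x = 4 * (x - oval_param \<psi> (-pi/2)) * (x - oval_param \<psi> (pi/2))
                       * (x - - (oval_param \<psi> (-pi/2) + oval_param \<psi> (pi/2)))" for x
    using cubicE_eq_product[OF _ oval_ends_cubic_roots] oval_ends_ordered(1) by (simp add: algebra_simps)
qed

lemma has_integral_cos_ratio_oval:
  assumes "a^2 \<le> 3" "a \<noteq> 0"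
  shows "((\<lambda>t. cos (a * oval_angle \<psi> t) / cos (oval_angle \<psi> t)) has_integral
           pi * hyperF ((1 - a) / 2) ((1 + a) / 2) 1 ((\<psi> + 2) / 4)) {-pi/2..pi/2}"
  using has_integral_cos_ratio_hyperF[OF assms, of "oval_scale \<psi>"] oval_scale_bounds
  unfolding oval_angle_def[abs_def] oval_scale_sq by simp

lemma has_integral_sin_ratio_oval:
  "((\<lambda>t. sin (b * oval_angle \<psi> t) / cos (oval_angle \<psi> t)) has_integral 0) {-pi/2..pi/2}"
  using has_integral_sin_ratio_zero[of "oval_scale \<psi>" b] oval_scale_bounds
  unfolding oval_angle_def[abs_def] by simp

lemma has_integral_oval_density:
  "(oval_density \<psi> has_integral pi / sqrt 3 * hyperF (1/6) (5/6) 1 ((\<psi> + 2) / 4)) {-pi/2..pi/2}"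
proof -
  have density: "oval_density \<psi> = (\<lambda>t. sqrt 3 / 3 * (cos (2/3 * oval_angle \<psi> t) / cos (oval_angle \<psi> t))
                                 + 1/3 * (sin (2/3 * oval_angle \<psi> t) / cos (oval_angle \<psi> t)))"
    by (simp add: fun_eq_iff oval_density_def sin_add sin_60 cos_60 add_divide_distrib ring_distribs)
  have val: "pi / sqrt 3 * hyperF (1/6) (5/6) 1 ((\<psi> + 2) / 4)
                   = sqrt 3 / 3 * (pi * hyperF (1/6) (5/6) 1 ((\<psi> + 2) / 4)) + 1/3 * 0"
    by (simp add: sqrt_3_div_3)
  have "((\<lambda>t. sqrt 3 / 3 * (cos (2/3 * oval_angle \<psi> t) / cos (oval_angle \<psi> t))
                        + 1/3 * (sin (2/3 * oval_angle \<psi> t) / cos (oval_angle \<psi> t))) has_integral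
                   sqrt 3 / 3 * (pi * hyperF (1/6) (5/6) 1 ((\<psi> + 2) / 4)) + 1/3 * 0) {-pi/2..pi/2}"
    using has_integral_cos_ratio_oval[of "2/3"]
    by (intro has_integral_add has_integral_mult_right has_integral_sin_ratio_oval) (simp add: power2_eq_square)
  then show ?thesis
    unfolding density val .
qed

lemma has_integral_oval_param_density:
  "((\<lambda>t. oval_param \<psi> t * oval_density \<psi> t) has_integral
      - (pi / sqrt 3) * hyperF (-1/6) (7/6) 1 ((\<psi> + 2) / 4)) {-pi/2..pi/2}"
proof -
  have product: "oval_param \<psi> t * oval_density \<psi> t
          = - (sqrt 3 / 3) * (cos (4/3 * oval_angle \<psi> t) / cos (oval_angle \<psi> t))
            + 1/3 * (sin (4/3 * oval_angle \<psi> t) / cos (oval_angle \<psi> t))" for t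
  proof -
    define \<beta> where "\<beta> = 2/3 * oval_angle \<psi> t"
    have "oval_param \<psi> t * oval_density \<psi> t
            = - (4/3) * (cos (pi/3 + \<beta>) * sin (pi/3 + \<beta>)) / cos (oval_angle \<psi> t)"
      unfolding oval_param_def oval_density_def \<beta>_def[symmetric] by simp
    also have "cos (pi/3 + \<beta>) * sin (pi/3 + \<beta>) = sqrt 3 / 4 * cos (2 * \<beta>) - 1/4 * sin (2 * \<beta>)"
      unfolding sin_add cos_add sin_60 cos_60 cos_double sin_double
      by (simp add: algebra_simps power2_eq_square)
    also have "2 * \<beta> = 4/3 * oval_angle \<psi> t"
      by (simp add: \<beta>_def)
    finally show ?thesis
      by (simp add: diff_divide_distrib ring_distribs)
  qed
  have val: "- (pi / sqrt 3) * hyperF (-1/6) (7/6) 1 ((\<psi> + 2) / 4)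
                   = - (sqrt 3 / 3) * (pi * hyperF (-1/6) (7/6) 1 ((\<psi> + 2) / 4)) + 1/3 * 0"
    by (simp add: sqrt_3_div_3)
  have "((\<lambda>t. - (sqrt 3 / 3) * (cos (4/3 * oval_angle \<psi> t) / cos (oval_angle \<psi> t))
                        + 1/3 * (sin (4/3 * oval_angle \<psi> t) / cos (oval_angle \<psi> t))) has_integral
                   - (sqrt 3 / 3) * (pi * hyperF (-1/6) (7/6) 1 ((\<psi> + 2) / 4)) + 1/3 * 0) {-pi/2..pi/2}"
    using has_integral_cos_ratio_oval[of "4/3"]
    by (intro has_integral_add has_integral_mult_right has_integral_sin_ratio_oval) (simp add: power2_eq_square)
  then show ?thesis
    unfolding product val .
qed

lemma has_integral_oval:
  assumes "continuous_on UNIV h" "\<And>t. 0 \<le> h (oval_param \<psi> t)"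
    and "((\<lambda>t. h (oval_param \<psi> t) * oval_density \<psi> t) has_integral I) {-pi/2..pi/2}"
  shows "((\<lambda>x. h x * (2 / sqrt (cubicE \<psi> x))) has_integral I) {oval_param \<psi> (-pi/2)..oval_param \<psi> (pi/2)}"
proof -
  have "((\<lambda>x. h x * (2 / sqrt (cubicE \<psi> x))) has_integral
          integral {-pi/2..pi/2} (\<lambda>t. h (oval_param \<psi> t) * oval_density \<psi> t))
          {oval_param \<psi> (-pi/2)..oval_param \<psi> (pi/2)}"
  proof (rule has_integral_substitution_nonneg)
    show "(oval_param \<psi> has_real_derivative 2 * oval_scale \<psi> * cos t * oval_density \<psi> t) (at t)" for t
      by (rule oval_param_has_derivative)
    show "isCont (\<lambda>t. 2 * oval_scale \<psi> * cos t * oval_density \<psi> t) t" for t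
      using isCont_oval_density by (intro continuous_intros)
    show "0 \<le> 2 * oval_scale \<psi> * cos t * oval_density \<psi> t" if "t \<in> {-pi/2..pi/2}" for t
    proof -
      have "0 \<le> cos t"
        using that by (intro cos_ge_zero) auto
      then show ?thesis
        using oval_scale_bounds oval_density_pos[of t] by simp
    qed
    have "isCont h x" for x
      using assms(1) by (simp add: continuous_on_eq_continuous_at)
    then have "isCont (\<lambda>t. h (oval_param \<psi> t) * oval_density \<psi> t) t" for t
      using isCont_o2[OF DERIV_isCont[OF oval_param_has_derivative]] isCont_oval_density
      by (intro isCont_mult) auto
    then show "continuous_on {-pi/2..pi/2} (\<lambda>t. h (oval_param \<psi> t) * oval_density \<psi> t)"
      by (intro continuous_at_imp_continuous_on) auto
    fix t :: real
    assume t: "t \<in> {-pi/2<..<pi/2}"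
    then have "cos t > 0"
      by (intro cos_gt_zero_pi) auto
    then have cubic_pos: "cubicE \<psi> (oval_param \<psi> t) > 0" and
      sqrt_cubic: "sqrt (cubicE \<psi> (oval_param \<psi> t)) = 4 * oval_scale \<psi> * cos t"
      using oval_scale_bounds
      by (simp_all add: cubicE_oval_param real_sqrt_mult power_mult_distrib[symmetric])
    show "isCont (\<lambda>x. h x * (2 / sqrt (cubicE \<psi> x))) (oval_param \<psi> t)"
      using assms(1) cubic_pos unfolding cubicE_def
      by (auto intro!: continuous_intros simp: continuous_on_eq_continuous_at)
    show "0 \<le> h (oval_param \<psi> t) * (2 / sqrt (cubicE \<psi> (oval_param \<psi> t)))"
      using assms(2)[of t] cubic_pos by simp
    show "h (oval_param \<psi> t) * (2 / sqrt (cubicE \<psi> (oval_param \<psi> t))) * (2 * oval_scale \<psi> * cos t * oval_density \<psi> t)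
            = h (oval_param \<psi> t) * oval_density \<psi> t"
      using sqrt_cubic \<open>cos t > 0\<close> oval_scale_bounds by (simp add: field_simps)
  qed simp
  then show ?thesis
    using assms(3) by (simp add: integral_unique)
qed

lemma has_integral_oval_period:
  "((\<lambda>x. 2 / sqrt (cubicE \<psi> x)) has_integral pi / sqrt 3 * hyperF (1/6) (5/6) 1 ((\<psi> + 2) / 4))
     {oval_param \<psi> (-pi/2)..oval_param \<psi> (pi/2)}"
  using has_integral_oval[of "\<lambda>_. 1"] has_integral_oval_density by simp

lemma has_integral_oval_x:
  "((\<lambda>x. 2 * x / sqrt (cubicE \<psi> x)) has_integral - (pi / sqrt 3) * hyperF (-1/6) (7/6) 1 ((\<psi> + 2) / 4))
     {oval_param \<psi> (-pi/2)..oval_param \<psi> (pi/2)}"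
proof -
  let ?F1 = "pi / sqrt 3 * hyperF (1/6) (5/6) 1 ((\<psi> + 2) / 4)"
  let ?F2 = "- (pi / sqrt 3) * hyperF (-1/6) (7/6) 1 ((\<psi> + 2) / 4)"
  have "((\<lambda>t. (oval_param \<psi> t + 3) * oval_density \<psi> t) has_integral ?F2 + 3 * ?F1) {-pi/2..pi/2}"
    unfolding distrib_right
    by (intro has_integral_add has_integral_mult_right has_integral_oval_param_density has_integral_oval_density)
  \<comment> \<open>the weight \<open>x + 3\<close> is used because it is nonnegative on the oval, as the substitution requires\<close>
  then have "((\<lambda>x. (x + 3) * (2 / sqrt (cubicE \<psi> x))) has_integral ?F2 + 3 * ?F1)
               {oval_param \<psi> (-pi/2)..oval_param \<psi> (pi/2)}"
  proof (rule has_integral_oval[rotated 2])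
    show "0 \<le> oval_param \<psi> t + 3" for t
      using oval_param_ge[of \<psi> t] by linarith
  qed (intro continuous_intros)
  from has_integral_diff[OF this has_integral_mult_right[OF has_integral_oval_period, of 3]]
  show ?thesis
    by (simp add: algebra_simps add_divide_distrib)
qed

end

theorem mainTheorem12:
  fixes \<psi> e1 e2 :: real
  assumes "-2 < \<psi>" and "\<psi> < 2"
    and "e1 < e2" and "cubicE \<psi> e1 = 0" and "cubicE \<psi> e2 = 0"
    and "\<forall>x\<in>{e1<..<e2}. cubicE \<psi> x > 0"
  shows "((\<lambda>x. 2 / sqrt (cubicE \<psi> x)) has_integral
            (pi / sqrt 3 * hyperF (1/6) (5/6) 1 ((\<psi> + 2) / 4))) {e1..e2}
       \<and> ((\<lambda>x. 2 * x / sqrt (cubicE \<psi> x)) has_integral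
            (- (pi / sqrt 3) * hyperF (-1/6) (7/6) 1 ((\<psi> + 2) / 4))) {e1..e2}"
proof -
  have "e1 = oval_param \<psi> (-pi/2) \<and> e2 = oval_param \<psi> (pi/2)"
    using oval_ends assms by blast
  then show ?thesis
    using has_integral_oval_period has_integral_oval_x assms(1,2) by simp
qed

end
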